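(* Let $0<q<1$, $q^*=2-q$, and define $\eta(x)=\exp_{q^*}(-x)$ for $x\ge0$ and $\eta(x)=1$ for $x\le0$. Let $X_1,\dots,X_n$ be i.i.d. random variables with probability density $f(x)=[\exp_{q^*}(-x)]^{q^*}$ for $x>0$ and $f(x)=0$ for $x<0$ (so that $\mathrm{Prob}(X_k\ge x)=\eta(x)$), and let $\eta_n(x)=\mathrm{Prob}\left(\frac1n\sum_{k=1}^nX_k\ge x\right)$. Then for all $x>0$, $$1-[1-\eta(nx)]^n\le\eta_n(x).$$
   Context: For $q\in(0,2)$, $q\ne1$, the $q$-deformed exponential is $\exp_q(u)=[1+(1-q)u]_+^{1/(1-q)}$ for real $u$, where $[u]_+=\max(u,0)$. *)

theory Defs
  imports "HOL-Probability.Probability"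
begin

definition q_exp :: "real \<Rightarrow> real \<Rightarrow> real" where
  "q_exp q u = (max 0 (1 + (1 - q) * u)) powr (1 / (1 - q))"

definition q_eta :: "real \<Rightarrow> real \<Rightarrow> real" where
  "q_eta q x = (if x \<le> 0 then 1 else q_exp (2 - q) (- x))"

definition q_density :: "real \<Rightarrow> real \<Rightarrow> real" where
  "q_density q x = (if x > 0 then (q_exp (2 - q) (- x)) powr (2 - q) else 0)"

end

theory Submission
  imports Defs
begin

text \<open>
  Since the summands are almost surely positive, the sum exceeds each of them, so the event
  \<open>\<Sum>X\<^sub>k \<ge> nx\<close> contains the event \<open>max X\<^sub>k \<ge> nx\<close>. By independence the complement of the latter has
  probability \<open>\<Prod>k Prob(X\<^sub>k < nx) = (1 - \<eta>(nx))\<^sup>n\<close>, the tail \<open>\<eta>\<close> being obtained by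
  integrating the density in closed form.
\<close>

lemma q_exp_two_minus_neg:
  assumes "q < 1" "t \<ge> 0"
  shows "q_exp (2 - q) (- t) = (1 + (1 - q) * t) powr (- 1 / (1 - q))"
proof -
  have "1 + (1 - (2 - q)) * - t = 1 + (1 - q) * t" by (simp add: algebra_simps)
  moreover have "1 / (1 - (2 - q)) = - 1 / (1 - q)" using assms by (simp add: field_simps)
  moreover have "0 \<le> 1 + (1 - q) * t" using assms by simp
  ultimately show ?thesis unfolding q_exp_def by simp
qed

lemma q_eta_nonneg_eq:
  assumes "q < 1" "y \<ge> 0"
  shows "q_eta q y = (1 + (1 - q) * y) powr (- 1 / (1 - q))"
  using assms q_exp_two_minus_neg[of q y] by (simp add: q_eta_def)

lemma q_density_pos_eq:
  assumes "q < 1" "t > 0"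
  shows "q_density q t = (1 + (1 - q) * t) powr (- (2 - q) / (1 - q))"
proof -
  have "- 1 / (1 - q) * (2 - q) = - (2 - q) / (1 - q)" using assms by (simp add: field_simps)
  then show ?thesis
    using assms q_exp_two_minus_neg[of q t] by (simp add: q_density_def powr_powr)
qed

lemma q_density_nonneg: "0 \<le> q_density q t"
  by (simp add: q_density_def)

lemma q_density_has_integral:
  assumes "q < 1" "y \<ge> 0"
  shows "(q_density q has_integral (1 - q_eta q y)) {0..y}"
proof -
  define a where "a = 1 - q"
  have a: "a > 0" using assms by (simp add: a_def)
  define F where "F t = - ((1 + a * t) powr (- 1 / a))" for t
  define h where "h t = (1 + a * t) powr (- (2 - q) / a)" for t
  have "(h has_integral (F y - F 0)) {0..y}"
  proof (rule fundamental_theorem_of_calculus)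
    fix t assume "t \<in> {0..y}"
    then have pos: "1 + a * t > 0" using a by (simp add: add_pos_nonneg)
    have "(F has_real_derivative - ((- 1 / a) * (1 + a * t) powr (- 1 / a - 1) * (0 + a * 1))) (at t)"
      unfolding F_def using pos by (intro derivative_eq_intros) auto
    moreover have "- 1 / a - 1 = - (2 - q) / a" using a by (simp add: a_def field_simps)
    ultimately have "(F has_real_derivative h t) (at t)" using a by (simp add: h_def)
    then show "(F has_vector_derivative h t) (at t within {0..y})"
      by (simp add: has_real_derivative_iff_has_vector_derivative has_vector_derivative_at_within)
  qed (use assms in simp)
  moreover have "F y - F 0 = 1 - q_eta q y"
    using q_eta_nonneg_eq[OF assms] by (simp add: F_def a_def)
  ultimately have "(h has_integral (1 - q_eta q y)) {0..y}" by simp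
  then show ?thesis
    by (rule has_integral_spike_finite[of "{0}", rotated 2])
       (use assms in \<open>auto simp: q_density_pos_eq h_def a_def\<close>)
qed

lemma (in prob_space) q_density_distributed_cdf:
  assumes D: "distributed M lborel X (\<lambda>t. ennreal (q_density q t))"
    and "q < 1" "y \<ge> 0"
  shows "prob (X -` {..y} \<inter> space M) = 1 - q_eta q y"
proof -
  have I: "(q_density q has_integral (1 - q_eta q y)) {0..y}"
    using q_density_has_integral assms by blast
  have "emeasure M (X -` {..y} \<inter> space M)
      = (\<integral>\<^sup>+t. ennreal (q_density q t) * indicator {..y} t \<partial>lborel)"
    using distributed_emeasure[OF D] by simp
  also have "\<dots> = (\<integral>\<^sup>+t. ennreal (q_density q t) * indicator {0..y} t \<partial>lborel)"
    by (rule nn_integral_cong) (auto simp: q_density_def indicator_def)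
  also have "\<dots> = ennreal (1 - q_eta q y)"
    by (rule nn_integral_has_integral_lebesgue'[OF _ I]) (simp add: q_density_nonneg)
  finally show ?thesis
    using has_integral_nonneg[OF I q_density_nonneg] by (simp add: measure_def)
qed

lemma (in prob_space) q_density_distributed_AE_pos:
  assumes D: "distributed M lborel X (\<lambda>t. ennreal (q_density q t))" and "q < 1"
  shows "AE \<omega> in M. X \<omega> > 0"
proof -
  have X: "X \<in> borel_measurable M" using distributed_measurable[OF D] by simp
  have "prob (X -` {..0} \<inter> space M) = 0"
    using q_density_distributed_cdf[OF assms order_refl] by (simp add: q_eta_def)
  moreover have "{\<omega> \<in> space M. \<not> X \<omega> > 0} = X -` {..0} \<inter> space M" by auto
  moreover have "X -` {..0} \<inter> space M \<in> events" by (rule measurable_sets[OF X]) auto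
  ultimately show ?thesis by (simp add: AE_iff_measurable emeasure_eq_measure)
qed

lemma (in prob_space) indep_vars_prob_sum_ge:
  assumes indep: "indep_vars (\<lambda>_. borel) X I" and "finite I" "I \<noteq> {}"
    and nonneg: "\<And>i. i \<in> I \<Longrightarrow> AE \<omega> in M. X i \<omega> \<ge> (0::real)"
  shows "1 - (\<Prod>i\<in>I. prob (X i -` {..<y} \<inter> space M))
           \<le> prob {\<omega> \<in> space M. y \<le> (\<Sum>i\<in>I. X i \<omega>)}"
proof -
  have X: "\<And>i. i \<in> I \<Longrightarrow> X i \<in> borel_measurable M"
    using indep by (simp add: indep_vars_def)
  define C where "C = (\<Inter>i\<in>I. X i -` {..<y} \<inter> space M)"
  have "prob C = (\<Prod>i\<in>I. prob (X i -` {..<y} \<inter> space M))"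
  proof -
    have "indep_sets (\<lambda>i. {X i -` A \<inter> space M | A. A \<in> sets borel}) I"
      using indep unfolding indep_vars_def2 by simp
    then show ?thesis unfolding C_def
      by (rule indep_setsD) (use assms(2,3) in \<open>auto intro!: exI[of _ "{..<y}"]\<close>)
  qed
  moreover have C: "C \<in> events"
    unfolding C_def using assms(2,3) by (intro sets.finite_INT) (auto intro: measurable_sets[OF X])
  moreover have "prob (space M - C) \<le> prob {\<omega> \<in> space M. y \<le> (\<Sum>i\<in>I. X i \<omega>)}"
  proof (rule finite_measure_mono_AE)
    have "AE \<omega> in M. \<forall>i\<in>I. X i \<omega> \<ge> 0"
      using \<open>finite I\<close> nonneg by (rule AE_finite_allI)
    then show "AE \<omega> in M. \<omega> \<in> space M - C \<longrightarrow> \<omega> \<in> {\<omega> \<in> space M. y \<le> (\<Sum>i\<in>I. X i \<omega>)}"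
    proof eventually_elim
      case (elim \<omega>)
      show ?case
      proof
        assume "\<omega> \<in> space M - C"
        then obtain i where "i \<in> I" "y \<le> X i \<omega>" "\<omega> \<in> space M"
          unfolding C_def using \<open>I \<noteq> {}\<close> by (auto simp: not_less)
        moreover have "X i \<omega> \<le> (\<Sum>i\<in>I. X i \<omega>)"
          using \<open>i \<in> I\<close> \<open>finite I\<close> elim by (intro member_le_sum) auto
        ultimately show "\<omega> \<in> {\<omega> \<in> space M. y \<le> (\<Sum>i\<in>I. X i \<omega>)}" by simp
      qed
    qed
    show "{\<omega> \<in> space M. y \<le> (\<Sum>i\<in>I. X i \<omega>)} \<in> events"
      using X by measurable
  qed
  ultimately show ?thesis by (simp add: prob_compl)
qed

theorem proposition5:
  fixes M :: "'a measure" and X :: "nat \<Rightarrow> 'a \<Rightarrow> real" and q x :: real and n :: nat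
  assumes "prob_space M"
    and "0 < q" and "q < 1"
    and "n \<ge> 1"
    and "prob_space.indep_vars M (\<lambda>_. borel) X {0..<n}"
    and "\<And>k. k < n \<Longrightarrow> distributed M lborel (X k) (\<lambda>t. ennreal (q_density q t))"
    and "x > 0"
  shows "1 - (1 - q_eta q (real n * x)) ^ n
           \<le> measure M {\<omega> \<in> space M. (1 / real n) * (\<Sum>k<n. X k \<omega>) \<ge> x}"
proof -
  interpret prob_space M by fact
  let ?y = "real n * x"
  have "prob (X k -` {..<?y} \<inter> space M) \<le> 1 - q_eta q ?y" if "k < n" for k
  proof -
    have "X k \<in> borel_measurable M" using distributed_measurable[OF assms(6)[OF that]] by simp
    then have "prob (X k -` {..<?y} \<inter> space M) \<le> prob (X k -` {..?y} \<inter> space M)"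
      by (intro finite_measure_mono measurable_sets) auto
    also have "\<dots> = 1 - q_eta q ?y"
      using assms that by (intro q_density_distributed_cdf) auto
    finally show ?thesis .
  qed
  then have "(\<Prod>k\<in>{0..<n}. prob (X k -` {..<?y} \<inter> space M)) \<le> (1 - q_eta q ?y) ^ n"
    using prod_mono[of "{0..<n}" "\<lambda>k. prob (X k -` {..<?y} \<inter> space M)" "\<lambda>_. 1 - q_eta q ?y"]
    by simp
  moreover have "1 - (\<Prod>k\<in>{0..<n}. prob (X k -` {..<?y} \<inter> space M))
      \<le> prob {\<omega> \<in> space M. ?y \<le> (\<Sum>k\<in>{0..<n}. X k \<omega>)}"
  proof (rule indep_vars_prob_sum_ge)
    show "AE \<omega> in M. 0 \<le> X k \<omega>" if "k \<in> {0..<n}" for k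
      using q_density_distributed_AE_pos[OF assms(6) assms(3), of k] that
      by (simp add: eventually_mono)
  qed (use assms(4,5) in auto)
  moreover have "?y \<le> (\<Sum>k<n. X k \<omega>) \<longleftrightarrow> (1 / real n) * (\<Sum>k<n. X k \<omega>) \<ge> x" for \<omega>
    using assms(4) by (simp add: field_simps)
  ultimately show ?thesis by (simp add: atLeast0LessThan)
qed

end
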